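(* Let $q\in L_1[0,\pi]$ with $C_0=0$ and suppose $q\in E$, i.e. $C_n=O(1/n)$ as $n\to\infty$. Then $S_1(n,q)=O(n^{-2})$ as $n\to\infty$, where \[ S_1(n,q)=\sum_{\substack{k,l\in\mathbb{Z}\\ k,\,k+l\neq0,-2n}}\frac{C_kC_lC_{-k-l}}{k(k+l)} . \]
   Context: $q$ is a complex-valued summable function on $[0,\pi]$; $C_k=\frac{1}{\pi}\int_0^\pi q(x)\cos kx\,dx$ for $k\in\mathbb{Z}$ (so $C_{-k}=C_k$), and it is assumed that $C_0=0$. $E$ is the set of such $q$ with $C_n=O(1/n)$ as $n\to\infty$. $n$ is a positive integer. *)

theory Defs
  imports "HOL-Analysis.Analysis" "HOL-Library.Landau_Symbols"
begin

definition cosC :: "(real \<Rightarrow> complex) \<Rightarrow> int \<Rightarrow> complex" where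
  "cosC q k = complex_of_real (1 / pi) *
     integral {0..pi} (\<lambda>x. q x * complex_of_real (cos (real_of_int k * x)))"

definition S1_index :: "nat \<Rightarrow> (int \<times> int) set" where
  "S1_index n = {(k, l). k \<noteq> 0 \<and> k \<noteq> - 2 * int n \<and> k + l \<noteq> 0 \<and> k + l \<noteq> - 2 * int n}"

definition S1_term :: "(real \<Rightarrow> complex) \<Rightarrow> int \<times> int \<Rightarrow> complex" where
  "S1_term q kl = (case kl of (k, l) \<Rightarrow>
     cosC q k * cosC q l * cosC q (- k - l) / (of_int k * of_int (k + l)))"

definition S1 :: "(real \<Rightarrow> complex) \<Rightarrow> nat \<Rightarrow> complex" where
  "S1 q n = infsum (S1_term q) (S1_index n)"

end

theory Submission
  imports Defs
begin

(* Substituting m = k + l, the summand becomes T(k, m) = C_k C_(m-k) C_m / (k m). Over all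
   integer pairs the double sum converges absolutely, because |C_k| <= M / |k| gives
   |T(k, m)| <= M^3 / (k^2 m^2), and it vanishes: the rotation (k, m) |-> (m - k, -k) has order
   three, preserves the product of the coefficients since C is even, and
   1/(k m) + 1/((m - k)(-k)) + 1/((-m)(k - m)) = 0. The sum S1(n, q) omits exactly the row
   k = -2n and the column m = -2n, and each of these sums to O(M^3 / n^2). *)

lemma bigo_inverse_imp_bound:
  fixes f :: "nat \<Rightarrow> real"
  assumes "f \<in> O(\<lambda>n. 1 / real n)"
  obtains M where "\<And>n. n > 0 \<Longrightarrow> \<bar>f n\<bar> \<le> M / real n"
proof -
  obtain c N where "c > 0" and tail: "\<And>n. n \<ge> N \<Longrightarrow> \<bar>f n\<bar> \<le> c / real n"
    using assms by (elim landau_o.bigE) (auto simp: eventually_at_top_linorder)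
  define M where "M = c + (\<Sum>i<N. real i * \<bar>f i\<bar>)"
  have head: "(\<Sum>i<N. real i * \<bar>f i\<bar>) \<ge> 0"
    by (intro sum_nonneg) simp
  have "\<bar>f n\<bar> \<le> M / real n" if "n > 0" for n
  proof (cases "n \<ge> N")
    case True
    have "c / real n \<le> M / real n"
      using head by (intro divide_right_mono) (auto simp: M_def)
    with tail[OF True] show ?thesis by linarith
  next
    case False
    then have "real n * \<bar>f n\<bar> \<le> (\<Sum>i<N. real i * \<bar>f i\<bar>)"
      by (intro member_le_sum) auto
    with \<open>c > 0\<close> \<open>n > 0\<close> show ?thesis
      by (simp add: M_def field_simps)
  qed
  then show ?thesis by (rule that)
qed

lemma summable_on_UNIV_intI:
  fixes f :: "int \<Rightarrow> 'a::banach"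
  assumes "(\<lambda>n. f (int n)) summable_on UNIV" and "(\<lambda>n. f (- int n)) summable_on UNIV"
  shows "f summable_on UNIV"
proof -
  have "f summable_on range int" and "f summable_on range (\<lambda>n. - int n)"
    using assms by (subst summable_on_reindex; force simp: inj_on_def o_def)+
  then have "f summable_on (range int \<union> (range (\<lambda>n. - int n) - range int))"
    by (intro summable_on_Un_disjoint) (auto intro: summable_on_subset_banach)
  also have "range int \<union> (range (\<lambda>n. - int n) - range int) = UNIV"
    by (auto intro: int_cases2)
  finally show ?thesis .
qed

definition inverse_square :: "int \<Rightarrow> real" where
  "inverse_square k = 1 / real_of_int k ^ 2"

lemma inverse_square_nonneg: "inverse_square k \<ge> 0"
  by (simp add: inverse_square_def)

lemma inverse_square_summable: "inverse_square summable_on UNIV"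
proof -
  have "(\<lambda>n::nat. 1 / real n ^ 2) summable_on UNIV"
    using inverse_power_summable[of 2, where 'a = real]
    by (subst summable_on_UNIV_nonneg_real_iff) (auto simp: divide_inverse)
  then show ?thesis
    by (intro summable_on_UNIV_intI) (simp_all add: inverse_square_def)
qed

lemma summable_on_times_nonneg:
  fixes u :: "'a \<Rightarrow> real" and v :: "'b \<Rightarrow> real"
  assumes "u summable_on A" and "v summable_on B"
    and "\<And>x. x \<in> A \<Longrightarrow> u x \<ge> 0" and "\<And>y. y \<in> B \<Longrightarrow> v y \<ge> 0"
  shows "(\<lambda>(x, y). u x * v y) summable_on A \<times> B"
proof (rule summable_on_SigmaI[where g = "\<lambda>x. u x * infsum v B"])
  show "((\<lambda>y. case (x, y) of (x, y) \<Rightarrow> u x * v y) has_sum u x * infsum v B) B" for x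
    using has_sum_cmult_right[OF has_sum_infsum[OF assms(2)]] by simp
  show "(\<lambda>x. u x * infsum v B) summable_on A"
    using summable_on_cmult_left[OF assms(1)] by simp
qed (use assms in auto)

lemma norm_infsum_row_le:
  fixes F :: "int \<times> int \<Rightarrow> 'a::banach"
  assumes "\<And>k m. norm (F (k, m)) \<le> C * (inverse_square k * inverse_square m)"
  shows "norm (\<Sum>\<^sub>\<infinity>m. F (j, m)) \<le> C * inverse_square j * (\<Sum>\<^sub>\<infinity>k. inverse_square k)"
proof (rule norm_infsum_le)
  have bound_summable: "(\<lambda>m. C * inverse_square j * inverse_square m) summable_on UNIV"
    by (intro summable_on_cmult_right inverse_square_summable)
  show "((\<lambda>m. C * inverse_square j * inverse_square m)
          has_sum C * inverse_square j * (\<Sum>\<^sub>\<infinity>k. inverse_square k)) UNIV"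
    by (intro has_sum_cmult_right has_sum_infsum inverse_square_summable)
  have "(\<lambda>m. norm (F (j, m))) summable_on UNIV"
    using assms by (intro Infinite_Sum.abs_summable_on_comparison_test'[OF bound_summable])
      (simp add: mult.assoc)
  then show "((\<lambda>m. F (j, m)) has_sum (\<Sum>\<^sub>\<infinity>m. F (j, m))) UNIV"
    by (simp add: abs_summable_summable)
qed (use assms in \<open>simp add: mult.assoc\<close>)

lemma infsum_eq_0_if_orbit_sums_eq_0:
  fixes f :: "'a \<Rightarrow> 'b::real_normed_vector"
  assumes \<sigma>: "bij_betw \<sigma> A A" and summable: "f summable_on A"
    and orbit: "\<And>x. x \<in> A \<Longrightarrow> f x + f (\<sigma> x) + f (\<sigma> (\<sigma> x)) = 0"
  shows "infsum f A = 0"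
proof -
  have \<sigma>\<sigma>: "bij_betw (\<lambda>x. \<sigma> (\<sigma> x)) A A"
    using bij_betw_trans[OF \<sigma> \<sigma>] by (simp add: o_def)
  have "(\<lambda>x. f (\<sigma> x)) summable_on A" and "(\<lambda>x. f (\<sigma> (\<sigma> x))) summable_on A"
    using summable summable_on_reindex_bij_betw[OF \<sigma>] summable_on_reindex_bij_betw[OF \<sigma>\<sigma>] by auto
  then have "0 = infsum f A + infsum (\<lambda>x. f (\<sigma> x)) A + infsum (\<lambda>x. f (\<sigma> (\<sigma> x))) A"
    using summable orbit infsum_cong[of A "\<lambda>x. f x + f (\<sigma> x) + f (\<sigma> (\<sigma> x))" "\<lambda>_. 0"]
    by (simp add: infsum_add summable_on_add)
  also have "\<dots> = 3 *\<^sub>R infsum f A"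
    unfolding infsum_reindex_bij_betw[OF \<sigma>] infsum_reindex_bij_betw[OF \<sigma>\<sigma>]
    by (simp add: scaleR_add_left[of 2 1, simplified] scaleR_2)
  finally show ?thesis by simp
qed

(* Terms with k = 0 or m = 0 vanish because x / 0 = 0, so sums may range over all pairs. *)
definition triple_term :: "(int \<Rightarrow> 'a::field) \<Rightarrow> int \<times> int \<Rightarrow> 'a" where
  "triple_term a = (\<lambda>(k, m). a k * a (m - k) * a m / (of_int k * of_int m))"

locale even_inverse_bounded =
  fixes a :: "int \<Rightarrow> 'a::{real_normed_field, banach}" and M :: real
  assumes even: "a (- k) = a k"
    and zero: "a 0 = 0"
    and bound: "k \<noteq> 0 \<Longrightarrow> norm (a k) \<le> M / \<bar>of_int k\<bar>"
begin

lemma M_nonneg: "M \<ge> 0"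
  using bound[of 1] norm_ge_zero[of "a 1"] by linarith

lemma norm_le: "norm (a k) \<le> M"
proof (cases "k = 0")
  case False
  then have abs_ge_1: "1 \<le> \<bar>real_of_int k\<bar>"
    by linarith
  have "M / \<bar>of_int k\<bar> \<le> M"
    using mult_left_mono[OF abs_ge_1 M_nonneg] abs_ge_1 by (simp add: divide_le_eq)
  with bound[OF False] show ?thesis by linarith
qed (simp add: zero M_nonneg)

lemma triple_term_rotate_sum:
  "triple_term a (k, m) + triple_term a (m - k, - k) + triple_term a (- m, k - m) = 0"
proof (cases "k = 0 \<or> m = 0 \<or> m = k")
  case True
  then show ?thesis by (auto simp: triple_term_def zero)
next
  case False
  define s where "s = a k * a (m - k) * a m"
  have terms: "triple_term a (k, m) = s / (of_int k * of_int m)"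
    "triple_term a (m - k, - k) = s / (of_int (m - k) * of_int (- k))"
    "triple_term a (- m, k - m) = s / (of_int (- m) * of_int (k - m))"
    using even[of k] even[of m] even[of "m - k"] by (simp_all add: triple_term_def s_def mult_ac)
  have "(of_int k :: 'a) \<noteq> 0" "(of_int m :: 'a) \<noteq> 0" "(of_int m - of_int k :: 'a) \<noteq> 0"
    using False by auto
  then have "s / (of_int k * of_int m) + s / (of_int (m - k) * of_int (- k))
      + s / (of_int (- m) * of_int (k - m)) = 0"
    by (simp add: field_simps)
  then show ?thesis
    by (simp only: terms)
qed

lemma norm_triple_term_le:
  "norm (triple_term a (k, m)) \<le> M ^ 3 * (inverse_square k * inverse_square m)"
proof (cases "k = 0 \<or> m = 0")
  case True
  then show ?thesis by (auto simp: triple_term_def inverse_square_def M_nonneg)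
next
  case False
  have factor: "norm (a i) / \<bar>of_int i\<bar> \<le> M * inverse_square i" if "i \<noteq> 0" for i
  proof -
    have "norm (a i) / \<bar>of_int i\<bar> \<le> M / \<bar>of_int i\<bar> / \<bar>of_int i\<bar>"
      using bound[OF that] by (rule divide_right_mono) simp
    also have "\<dots> = M * inverse_square i"
      by (simp add: inverse_square_def power2_eq_square abs_mult_self_eq flip: abs_mult)
    finally show ?thesis .
  qed
  have "norm (triple_term a (k, m))
          = (norm (a k) / \<bar>of_int k\<bar>) * norm (a (m - k)) * (norm (a m) / \<bar>of_int m\<bar>)"
    by (simp add: triple_term_def norm_mult norm_divide)
  also have "\<dots> \<le> (M * inverse_square k) * M * (M * inverse_square m)"
    using False factor norm_le M_nonneg by (intro mult_mono) (auto simp: inverse_square_nonneg)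
  finally show ?thesis
    by (simp add: power3_eq_cube mult_ac)
qed

lemma triple_term_summable: "triple_term a summable_on UNIV"
proof -
  have weight: "(\<lambda>(k, m). inverse_square k * inverse_square m) summable_on UNIV \<times> UNIV"
    by (intro summable_on_times_nonneg inverse_square_summable inverse_square_nonneg)
  have "(\<lambda>p. M ^ 3 * (inverse_square (fst p) * inverse_square (snd p))) summable_on UNIV"
    using summable_on_cmult_right[OF weight, of "M ^ 3"] by (simp add: split_def)
  then have "(\<lambda>p. norm (triple_term a p)) summable_on UNIV"
    by (rule Infinite_Sum.abs_summable_on_comparison_test') (auto simp: norm_triple_term_le)
  then show ?thesis
    by (rule abs_summable_summable)
qed

lemma infsum_triple_term: "infsum (triple_term a) UNIV = 0"
proof (rule infsum_eq_0_if_orbit_sums_eq_0)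
  let ?\<sigma> = "\<lambda>(k, m). (m - k, - k :: int)"
  show "bij_betw ?\<sigma> UNIV UNIV"
    by (rule bij_betwI[where g = "\<lambda>p. ?\<sigma> (?\<sigma> p)"]) (auto simp: algebra_simps)
  show "triple_term a p + triple_term a (?\<sigma> p) + triple_term a (?\<sigma> (?\<sigma> p)) = 0" for p
    using triple_term_rotate_sum[of "fst p" "snd p"] by (auto simp: case_prod_beta)
qed (rule triple_term_summable)

lemma norm_infsum_off_lines_le:
  "norm (infsum (triple_term a) {(k, m). k \<noteq> j \<and> m \<noteq> j})
     \<le> 2 * M ^ 3 * inverse_square j * (\<Sum>\<^sub>\<infinity>k. inverse_square k)"
proof -
  let ?T = "triple_term a" and ?Z = "\<Sum>\<^sub>\<infinity>k. inverse_square k"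
  define row :: "(int \<times> int) set" where "row = range (Pair j)"
  define column :: "(int \<times> int) set" where "column = range (\<lambda>k. (k, j))"
  have summable: "?T summable_on A" for A
    using triple_term_summable by (rule summable_on_subset_banach) simp
  have "{(k, m). k \<noteq> j \<and> m \<noteq> j} \<inter> (row \<union> column) = {}"
    and "{(k, m). k \<noteq> j \<and> m \<noteq> j} \<union> (row \<union> column) = UNIV"
    by (auto simp: row_def column_def)
  then have "infsum ?T {(k, m). k \<noteq> j \<and> m \<noteq> j} + infsum ?T (row \<union> column) = 0"
    using infsum_Un_disjoint[OF summable summable] infsum_triple_term by metis
  moreover have "infsum ?T (row \<union> column) = infsum ?T row + infsum ?T column"
  proof -
    have "row \<inter> column = {(j, j)}" by (auto simp: row_def column_def)
    moreover have "?T (j, j) = 0" by (simp add: triple_term_def zero)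
    ultimately show ?thesis by (simp add: infsum_Un_Int summable)
  qed
  moreover have "infsum ?T row = (\<Sum>\<^sub>\<infinity>m. ?T (j, m))" and "infsum ?T column = (\<Sum>\<^sub>\<infinity>k. ?T (k, j))"
    by (simp_all add: row_def column_def infsum_reindex inj_on_def o_def)
  ultimately have "norm (infsum ?T {(k, m). k \<noteq> j \<and> m \<noteq> j})
                     = norm ((\<Sum>\<^sub>\<infinity>m. ?T (j, m)) + (\<Sum>\<^sub>\<infinity>k. ?T (k, j)))"
    by (metis add.commute add_eq_0_iff2 norm_minus_cancel)
  also have "\<dots> \<le> norm (\<Sum>\<^sub>\<infinity>m. ?T (j, m)) + norm (\<Sum>\<^sub>\<infinity>k. ?T (k, j))"
    by (rule norm_triangle_ineq)
  also have "norm (\<Sum>\<^sub>\<infinity>m. ?T (j, m)) \<le> M ^ 3 * inverse_square j * ?Z"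
    by (rule norm_infsum_row_le) (rule norm_triple_term_le)
  also have "norm (\<Sum>\<^sub>\<infinity>k. ?T (k, j)) \<le> M ^ 3 * inverse_square j * ?Z"
  proof -
    have "norm (?T (m, k)) \<le> M ^ 3 * (inverse_square k * inverse_square m)" for k m
      using norm_triple_term_le[of m k] by (simp add: mult.commute)
    then show ?thesis
      using norm_infsum_row_le[of "\<lambda>(m, k). ?T (k, m)" "M ^ 3" j] by simp
  qed
  finally show ?thesis
    by (simp add: mult_ac)
qed

end

lemma cosC_uminus: "cosC q (- k) = cosC q k"
  by (simp add: cosC_def)

lemma cosC_bound:
  assumes "(\<lambda>n::nat. norm (cosC q (int n))) \<in> O(\<lambda>n. 1 / real n)"
  obtains M where "\<And>k. k \<noteq> 0 \<Longrightarrow> norm (cosC q k) \<le> M / \<bar>of_int k\<bar>"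
proof -
  obtain M where M: "\<And>n. n > 0 \<Longrightarrow> \<bar>norm (cosC q (int n))\<bar> \<le> M / real n"
    using bigo_inverse_imp_bound[OF assms] by blast
  have "norm (cosC q k) \<le> M / \<bar>of_int k\<bar>" if "k \<noteq> 0" for k
  proof -
    have "cosC q k = cosC q (int (nat \<bar>k\<bar>))"
      by (cases "k \<ge> 0") (simp_all add: cosC_uminus abs_if)
    with M[of "nat \<bar>k\<bar>"] that show ?thesis
      by simp
  qed
  then show ?thesis by (rule that)
qed

lemma S1_term_eq_triple_term: "S1_term q = (\<lambda>(k, l). triple_term (cosC q) (k, k + l))"
proof -
  have "cosC q (- k - l) = cosC q (k + l)" for k l
    using cosC_uminus[of q "k + l"] by simp
  then show ?thesis
    by (simp add: fun_eq_iff S1_term_def triple_term_def)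
qed

lemma bij_betw_S1_index:
  "bij_betw (\<lambda>(k, l). (k, k + l)) (S1_index n)
     {(k, m). k \<noteq> 0 \<and> m \<noteq> 0 \<and> k \<noteq> - 2 * int n \<and> m \<noteq> - 2 * int n}"
  by (rule bij_betwI[where g = "\<lambda>(k, m). (k, m - k)"]) (auto simp: S1_index_def)

lemma summable_on_S1_index:
  assumes "triple_term (cosC q) summable_on UNIV"
  shows "S1_term q summable_on S1_index n"
  using summable_on_reindex_bij_betw[OF bij_betw_S1_index, of "triple_term (cosC q)"]
    summable_on_subset_banach[OF assms]
  by (simp add: S1_term_eq_triple_term split_def)

lemma S1_eq_infsum_triple_term:
  "S1 q n = infsum (triple_term (cosC q)) {(k, m). k \<noteq> - 2 * int n \<and> m \<noteq> - 2 * int n}"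
proof -
  have "S1 q n = infsum (triple_term (cosC q))
                   {(k, m). k \<noteq> 0 \<and> m \<noteq> 0 \<and> k \<noteq> - 2 * int n \<and> m \<noteq> - 2 * int n}"
    using infsum_reindex_bij_betw[OF bij_betw_S1_index, of "triple_term (cosC q)"]
    by (simp add: S1_def S1_term_eq_triple_term split_def)
  also have "\<dots> = infsum (triple_term (cosC q)) {(k, m). k \<noteq> - 2 * int n \<and> m \<noteq> - 2 * int n}"
    by (intro infsum_cong_neutral) (auto simp: triple_term_def)
  finally show ?thesis .
qed

theorem proposition1:
  fixes q :: "real \<Rightarrow> complex"
  assumes "q absolutely_integrable_on {0..pi}"
    and "cosC q 0 = 0"
    and "(\<lambda>n::nat. norm (cosC q (int n))) \<in> O(\<lambda>n. 1 / real n)"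
  shows "(\<forall>n::nat. n > 0 \<longrightarrow> S1_term q summable_on S1_index n) \<and>
         (\<lambda>n::nat. norm (S1 q n)) \<in> O(\<lambda>n. 1 / (real n)^2)"
proof -
  obtain M where "\<And>k. k \<noteq> 0 \<Longrightarrow> norm (cosC q k) \<le> M / \<bar>of_int k\<bar>"
    using cosC_bound[OF assms(3)] by blast
  then interpret even_inverse_bounded "cosC q" M
    using assms(2) by unfold_locales (simp_all add: cosC_uminus)
  define Z where "Z = (\<Sum>\<^sub>\<infinity>k. inverse_square k)"
  have bound: "norm (S1 q n) \<le> M ^ 3 * Z / 2 * norm (1 / (real n)^2)" for n
    using norm_infsum_off_lines_le[of "- 2 * int n"]
    by (simp add: S1_eq_infsum_triple_term Z_def inverse_square_def power2_eq_square)
  have "(\<lambda>n. norm (S1 q n)) \<in> O(\<lambda>n. 1 / (real n)^2)"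
    by (intro bigoI[of _ "M ^ 3 * Z / 2"] always_eventually allI) (use bound in simp)
  with triple_term_summable show ?thesis
    by (auto intro: summable_on_S1_index)
qed

end
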